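(* Let $B\in\mathbb{R}^{n\times d}$ with $\|B\|=R\in(0,\infty)$, $g^*:\mathbb{R}^n\to\mathbb{R}\cup\{+\infty\}$ proper, lower semicontinuous and $\gamma$-strongly convex ($\gamma\ge0$), $\ell:\mathbb{R}^d\to\mathbb{R}\cup\{+\infty\}$ proper, lower semicontinuous and $\sigma$-strongly convex ($\sigma\ge0$). For the PDA$^2$ algorithm in the context, for all $(u,v)\in\mathcal{X}\times\mathcal{Y}$ and $k\ge1$, $$\begin{aligned}\psi_k(y_k)\ge\;&\psi_{k-1}(y_{k-1})+\frac{1+\gamma A_{k-1}}{2}\|y_k-y_{k-1}\|^2+a_k\big(g^*(y_k)+\langle-Bx_k,y_k-v\rangle\big)\\&+a_k\langle B(x_k-x_{k-1}),y_k-v\rangle-a_{k-1}\langle B(x_{k-1}-x_{k-2}),y_{k-1}-v\rangle-a_{k-1}\langle B(x_{k-1}-x_{k-2}),y_k-y_{k-1}\rangle,\end{aligned}$$ $$\phi_k(x_k)\ge\phi_{k-1}(x_{k-1})+\frac{1+\sigma A_{k-1}}{2}\|x_k-x_{k-1}\|^2+a_k\big(\langle x_k-u,B^Ty_k\rangle+\ell(x_k)\big).$$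
   Context: Norms are Euclidean; $\sigma$-strong convexity of $f$ means $f((1-\alpha)x+\alpha\hat x)\le(1-\alpha)f(x)+\alpha f(\hat x)-\frac\sigma2\alpha(1-\alpha)\|\hat x-x\|^2$ for all $x,\hat x$, $\alpha\in(0,1)$. $\mathcal{X}=\mathrm{dom}(\ell)$, $\mathcal{Y}=\mathrm{dom}(g^* )$. PDA$^2$ algorithm: given $(x_0,y_0),(u,v)\in\mathcal{X}\times\mathcal{Y}$, set $a_0=A_0=0$, $x_{-1}=x_0$, $\phi_0(x)=\frac12\|x-x_0\|^2$, $\psi_0(y)=\frac12\|y-y_0\|^2$. For $k=1,2,\dots$: $a_k=\frac{\sqrt{(1+\sigma A_{k-1})(1+\gamma A_{k-1})}}{\sqrt2R}$, $A_k=A_{k-1}+a_k$; $\bar x_{k-1}=x_{k-1}+\frac{a_{k-1}}{a_k}(x_{k-1}-x_{k-2})$; $\psi_k(y)=\psi_{k-1}(y)+a_k(\langle-B\bar x_{k-1},y-v\rangle+g^*(y))$, $y_k=\arg\min_{y}\psi_k(y)$; $\phi_k(x)=\phi_{k-1}(x)+a_k(\langle x-u,B^Ty_k\rangle+\ell(x))$, $x_k=\arg\min_x\phi_k(x)$. *)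

theory Defs
  imports "HOL-Analysis.Analysis" "HOL-Library.Extended_Real"
begin

definition proper_fun :: "('a \<Rightarrow> ereal) \<Rightarrow> bool" where
  "proper_fun f \<longleftrightarrow> (\<forall>x. f x \<noteq> -\<infinity>) \<and> (\<exists>x. f x \<noteq> \<infinity>)"

definition lsc_fun :: "('a::topological_space \<Rightarrow> ereal) \<Rightarrow> bool" where
  "lsc_fun f \<longleftrightarrow> (\<forall>c. closed {x. f x \<le> c})"

definition strongly_convex_ereal :: "real \<Rightarrow> ('a::real_normed_vector \<Rightarrow> ereal) \<Rightarrow> bool" where
  "strongly_convex_ereal s f \<longleftrightarrow>
     (\<forall>x xh \<alpha>. 0 < \<alpha> \<and> \<alpha> < 1 \<longrightarrow>
        f ((1 - \<alpha>) *\<^sub>R x + \<alpha> *\<^sub>R xh)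
          \<le> ereal (1 - \<alpha>) * f x + ereal \<alpha> * f xh
             - ereal (s / 2 * \<alpha> * (1 - \<alpha>) * (norm (xh - x))\<^sup>2))"

definition edom :: "('a \<Rightarrow> ereal) \<Rightarrow> 'a set" where
  "edom f = {x. f x < \<infinity>}"

fun pda_A :: "real \<Rightarrow> real \<Rightarrow> real \<Rightarrow> nat \<Rightarrow> real" where
  "pda_A s g R 0 = 0"
| "pda_A s g R (Suc k) = pda_A s g R k
     + sqrt ((1 + s * pda_A s g R k) * (1 + g * pda_A s g R k)) / (sqrt 2 * R)"

fun pda_a :: "real \<Rightarrow> real \<Rightarrow> real \<Rightarrow> nat \<Rightarrow> real" where
  "pda_a s g R 0 = 0"
| "pda_a s g R (Suc k) = sqrt ((1 + s * pda_A s g R k) * (1 + g * pda_A s g R k)) / (sqrt 2 * R)"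

definition prev_iter :: "(nat \<Rightarrow> 'a) \<Rightarrow> nat \<Rightarrow> 'a" where
  "prev_iter x j = (if j = 0 then x 0 else x (j - 1))"

definition pda_xbar :: "(nat \<Rightarrow> real) \<Rightarrow> (nat \<Rightarrow> real^'d) \<Rightarrow> nat \<Rightarrow> real^'d" where
  "pda_xbar a x k = x k + (a k / a (Suc k)) *\<^sub>R (x k - prev_iter x k)"

fun pda_psi :: "real^'d^'n \<Rightarrow> (real^'n \<Rightarrow> ereal) \<Rightarrow> (nat \<Rightarrow> real) \<Rightarrow> real^'n \<Rightarrow> real^'n
      \<Rightarrow> (nat \<Rightarrow> real^'d) \<Rightarrow> nat \<Rightarrow> real^'n \<Rightarrow> ereal" where
  "pda_psi B gs a y0 v x 0 y = ereal ((norm (y - y0))\<^sup>2 / 2)"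
| "pda_psi B gs a y0 v x (Suc k) y = pda_psi B gs a y0 v x k y
     + ereal (a (Suc k)) * (ereal (inner (- (B *v pda_xbar a x k)) (y - v)) + gs y)"

fun pda_phi :: "real^'d^'n \<Rightarrow> (real^'d \<Rightarrow> ereal) \<Rightarrow> (nat \<Rightarrow> real) \<Rightarrow> real^'d \<Rightarrow> real^'d
      \<Rightarrow> (nat \<Rightarrow> real^'n) \<Rightarrow> nat \<Rightarrow> real^'d \<Rightarrow> ereal" where
  "pda_phi B l a x0 u y 0 x = ereal ((norm (x - x0))\<^sup>2 / 2)"
| "pda_phi B l a x0 u y (Suc k) x = pda_phi B l a x0 u y k x
     + ereal (a (Suc k)) * (ereal (inner (x - u) (transpose B *v y (Suc k))) + l x)"

end

theory Submission
  imports Defs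
begin

(* Each psi_k is the 1-strongly convex term |y - y_0|^2/2 plus the multiples a_i (i <= k) of the
   gamma-strongly convex g^* and of affine functions, hence it is (1 + gamma A_k)-strongly convex.
   A strongly convex function grows quadratically away from its minimizer, so
   psi_{k-1}(y_k) >= psi_{k-1}(y_{k-1}) + (1 + gamma A_{k-1})/2 |y_k - y_{k-1}|^2; adding the k-th
   term of psi_k and expanding the extrapolated point xbar_{k-1} gives the first inequality, and the
   same argument for phi gives the second. Lower semicontinuity, the norm of B and the domain
   conditions only serve the existence of the minimizers, which is assumed here. *)

lemma add_le_of_convex_comb_bound:
  fixes p q c :: real
  assumes bound: "\<And>\<alpha>. 0 < \<alpha> \<Longrightarrow> \<alpha> < 1 \<Longrightarrow> p \<le> (1 - \<alpha>) * p + \<alpha> * q - c * \<alpha> * (1 - \<alpha>)"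
  shows "p + c \<le> q"
proof -
  have "p + c \<le> q + c * \<alpha>" if "0 < \<alpha>" "\<alpha> < 1" for \<alpha>
  proof -
    have "\<alpha> * p \<le> \<alpha> * (q - c * (1 - \<alpha>))"
      using bound[OF that] by (simp add: algebra_simps)
    then have "p \<le> q - c * (1 - \<alpha>)"
      using that(1) by (simp only: mult_le_cancel_left_pos)
    then show ?thesis
      by (simp add: algebra_simps)
  qed
  then have "\<forall>\<^sub>F \<alpha> in at_right 0. p + c \<le> q + c * \<alpha>"
    by (intro eventually_at_rightI[of 0 1]) auto
  moreover have "((\<lambda>\<alpha>. q + c * \<alpha>) \<longlongrightarrow> q) (at_right 0)"
    by (auto intro!: tendsto_eq_intros)
  ultimately show ?thesis
    by (intro tendsto_le[OF trivial_limit_at_right_real _ tendsto_const])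
qed

lemma strongly_convex_ereal_minimizer_growth:
  fixes f :: "'a::real_normed_vector \<Rightarrow> ereal"
  assumes sc: "strongly_convex_ereal \<mu> f" and min: "\<And>w. f p \<le> f w"
  shows "f p + ereal (\<mu> / 2 * (norm (z - p))\<^sup>2) \<le> f z"
proof (cases "f p = -\<infinity> \<or> f z = \<infinity>")
  case False
  with min[of z] have "\<bar>f p\<bar> \<noteq> \<infinity>" "\<bar>f z\<bar> \<noteq> \<infinity>"
    by auto
  then obtain P Z where P: "f p = ereal P" and Z: "f z = ereal Z"
    by (metis ereal_real')
  have "P \<le> (1 - \<alpha>) * P + \<alpha> * Z - \<mu> / 2 * (norm (z - p))\<^sup>2 * \<alpha> * (1 - \<alpha>)"
    if "0 < \<alpha>" "\<alpha> < 1" for \<alpha>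
  proof -
    have "f p \<le> f ((1 - \<alpha>) *\<^sub>R p + \<alpha> *\<^sub>R z)" by (rule min)
    also have "\<dots> \<le> ereal (1 - \<alpha>) * f p + ereal \<alpha> * f z
        - ereal (\<mu> / 2 * \<alpha> * (1 - \<alpha>) * (norm (z - p))\<^sup>2)"
      using sc that unfolding strongly_convex_ereal_def by blast
    finally show ?thesis
      by (simp add: P Z algebra_simps)
  qed
  then show ?thesis
    using add_le_of_convex_comb_bound by (simp add: P Z)
qed auto

lemma strongly_convex_ereal_add:
  fixes f g :: "'a::real_normed_vector \<Rightarrow> ereal"
  assumes "strongly_convex_ereal s f" "strongly_convex_ereal t g"
    and "\<And>x. f x \<noteq> -\<infinity>" "\<And>x. g x \<noteq> -\<infinity>"
  shows "strongly_convex_ereal (s + t) (\<lambda>x. f x + g x)"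
  unfolding strongly_convex_ereal_def
proof (intro allI impI)
  fix x xh :: 'a and \<alpha> :: real
  assume \<alpha>: "0 < \<alpha> \<and> \<alpha> < 1"
  let ?w = "(1 - \<alpha>) *\<^sub>R x + \<alpha> *\<^sub>R xh" and ?D = "(norm (xh - x))\<^sup>2"
  have "f ?w + g ?w \<le> (ereal (1 - \<alpha>) * f x + ereal \<alpha> * f xh - ereal (s / 2 * \<alpha> * (1 - \<alpha>) * ?D))
      + (ereal (1 - \<alpha>) * g x + ereal \<alpha> * g xh - ereal (t / 2 * \<alpha> * (1 - \<alpha>) * ?D))"
    using assms(1,2) \<alpha> unfolding strongly_convex_ereal_def by (blast intro: add_mono)
  also have "\<dots> = ereal (1 - \<alpha>) * (f x + g x) + ereal \<alpha> * (f xh + g xh)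
      - ereal ((s + t) / 2 * \<alpha> * (1 - \<alpha>) * ?D)"
    using \<alpha> assms(3,4)[of x] assms(3,4)[of xh]
    by (cases "f x"; cases "f xh"; cases "g x"; cases "g xh") (simp_all add: field_simps)
  finally show "f ?w + g ?w \<le> ereal (1 - \<alpha>) * (f x + g x) + ereal \<alpha> * (f xh + g xh)
      - ereal ((s + t) / 2 * \<alpha> * (1 - \<alpha>) * ?D)" .
qed

lemma strongly_convex_ereal_cmult:
  fixes f :: "'a::real_normed_vector \<Rightarrow> ereal"
  assumes "strongly_convex_ereal s f" "0 \<le> c" "\<And>x. f x \<noteq> -\<infinity>"
  shows "strongly_convex_ereal (c * s) (\<lambda>x. ereal c * f x)"
  unfolding strongly_convex_ereal_def
proof (intro allI impI)
  fix x xh :: 'a and \<alpha> :: real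
  assume \<alpha>: "0 < \<alpha> \<and> \<alpha> < 1"
  let ?w = "(1 - \<alpha>) *\<^sub>R x + \<alpha> *\<^sub>R xh" and ?D = "(norm (xh - x))\<^sup>2"
  have "ereal c * f ?w \<le> ereal c * (ereal (1 - \<alpha>) * f x + ereal \<alpha> * f xh
      - ereal (s / 2 * \<alpha> * (1 - \<alpha>) * ?D))"
    using assms(1,2) \<alpha> unfolding strongly_convex_ereal_def by (simp add: ereal_mult_left_mono)
  also have "\<dots> = ereal (1 - \<alpha>) * (ereal c * f x) + ereal \<alpha> * (ereal c * f xh)
      - ereal (c * s / 2 * \<alpha> * (1 - \<alpha>) * ?D)"
    using \<alpha> assms(2) assms(3)[of x] assms(3)[of xh]
    by (cases "f x"; cases "f xh") (simp_all add: algebra_simps)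
  finally show "ereal c * f ?w \<le> ereal (1 - \<alpha>) * (ereal c * f x) + ereal \<alpha> * (ereal c * f xh)
      - ereal (c * s / 2 * \<alpha> * (1 - \<alpha>) * ?D)" .
qed

lemma strongly_convex_ereal_affine:
  assumes "\<And>x xh \<alpha>. h ((1 - \<alpha>) *\<^sub>R x + \<alpha> *\<^sub>R xh) = (1 - \<alpha>) * h x + \<alpha> * h xh"
  shows "strongly_convex_ereal 0 (\<lambda>x. ereal (h x))"
  unfolding strongly_convex_ereal_def by (simp add: assms)

lemma norm_convex_comb_squared:
  fixes p r :: "'a::real_inner"
  shows "(norm ((1 - \<alpha>) *\<^sub>R p + \<alpha> *\<^sub>R r))\<^sup>2
     = (1 - \<alpha>) * (norm p)\<^sup>2 + \<alpha> * (norm r)\<^sup>2 - \<alpha> * (1 - \<alpha>) * (norm (r - p))\<^sup>2"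
  by (simp add: power2_norm_eq_inner inner_add_left inner_add_right inner_diff_left
      inner_diff_right inner_commute algebra_simps)

lemma strongly_convex_ereal_half_dist_squared:
  fixes c :: "'a::real_inner"
  shows "strongly_convex_ereal 1 (\<lambda>x. ereal ((norm (x - c))\<^sup>2 / 2))"
  unfolding strongly_convex_ereal_def
proof (intro allI impI)
  fix x xh :: 'a and \<alpha> :: real
  have "(1 - \<alpha>) *\<^sub>R x + \<alpha> *\<^sub>R xh - c = (1 - \<alpha>) *\<^sub>R (x - c) + \<alpha> *\<^sub>R (xh - c)"
    by (simp add: algebra_simps)
  then have "(norm ((1 - \<alpha>) *\<^sub>R x + \<alpha> *\<^sub>R xh - c))\<^sup>2
      = (1 - \<alpha>) * (norm (x - c))\<^sup>2 + \<alpha> * (norm (xh - c))\<^sup>2 - \<alpha> * (1 - \<alpha>) * (norm (xh - x))\<^sup>2"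
    by (simp add: norm_convex_comb_squared)
  then show "ereal ((norm ((1 - \<alpha>) *\<^sub>R x + \<alpha> *\<^sub>R xh - c))\<^sup>2 / 2)
      \<le> ereal (1 - \<alpha>) * ereal ((norm (x - c))\<^sup>2 / 2) + ereal \<alpha> * ereal ((norm (xh - c))\<^sup>2 / 2)
         - ereal (1 / 2 * \<alpha> * (1 - \<alpha>) * (norm (xh - x))\<^sup>2)"
    by (simp add: field_simps)
qed

lemma model_neq_MInfty:
  fixes F :: "nat \<Rightarrow> 'a \<Rightarrow> ereal"
  assumes F0: "\<And>z. F 0 z \<noteq> -\<infinity>"
    and FSuc: "\<And>k z. F (Suc k) z = F k z + ereal (a (Suc k)) * (ereal (L k z) + h z)"
    and h: "\<And>z. h z \<noteq> -\<infinity>" and a: "\<And>i. 0 \<le> a i"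
  shows "F k z \<noteq> -\<infinity>"
proof (induction k)
  case (Suc k)
  have "ereal (a (Suc k)) * (ereal (L k z) + h z) \<noteq> -\<infinity>"
    using a[of "Suc k"] h[of z] by (cases "h z") (auto simp: ereal_mult_eq_MInfty)
  with Suc show ?case
    by (simp add: FSuc)
qed (rule F0)

lemma strongly_convex_ereal_model:
  fixes F :: "nat \<Rightarrow> 'a::real_inner \<Rightarrow> ereal"
  assumes F0: "\<And>z. F 0 z = ereal ((norm (z - c))\<^sup>2 / 2)"
    and FSuc: "\<And>k z. F (Suc k) z = F k z + ereal (a (Suc k)) * (ereal (L k z) + h z)"
    and L: "\<And>k z zh \<alpha>. L k ((1 - \<alpha>) *\<^sub>R z + \<alpha> *\<^sub>R zh) = (1 - \<alpha>) * L k z + \<alpha> * L k zh"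
    and h: "strongly_convex_ereal \<mu> h" "\<And>z. h z \<noteq> -\<infinity>"
    and a: "\<And>i. 0 \<le> a i"
  shows "strongly_convex_ereal (1 + \<mu> * (\<Sum>i<k. a (Suc i))) (F k)"
proof (induction k)
  case 0
  show ?case
    using strongly_convex_ereal_half_dist_squared[of c] by (simp add: F0)
next
  case (Suc k)
  have "strongly_convex_ereal (0 + \<mu>) (\<lambda>z. ereal (L k z) + h z)"
    using L h by (intro strongly_convex_ereal_add strongly_convex_ereal_affine) auto
  then have "strongly_convex_ereal (a (Suc k) * (0 + \<mu>)) (\<lambda>z. ereal (a (Suc k)) * (ereal (L k z) + h z))"
    using a h(2) by (intro strongly_convex_ereal_cmult) auto
  then have "strongly_convex_ereal (1 + \<mu> * (\<Sum>i<k. a (Suc i)) + a (Suc k) * (0 + \<mu>))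
      (\<lambda>z. F k z + ereal (a (Suc k)) * (ereal (L k z) + h z))"
  proof (rule strongly_convex_ereal_add[OF Suc.IH])
    show "F k z \<noteq> -\<infinity>" for z
      by (rule model_neq_MInfty[where F=F, OF _ FSuc h(2) a]) (simp add: F0)
    show "ereal (a (Suc k)) * (ereal (L k z) + h z) \<noteq> -\<infinity>" for z
      using a[of "Suc k"] h(2)[of z] by (cases "h z") (auto simp: ereal_mult_eq_MInfty)
  qed
  then show ?case
    by (simp add: FSuc algebra_simps)
qed

lemma pda_a_pos:
  assumes "0 \<le> \<sigma>" "0 \<le> \<gamma>" "0 < R"
  shows "0 < pda_a \<sigma> \<gamma> R (Suc k)"
proof -
  have "0 \<le> pda_A \<sigma> \<gamma> R k"
    using assms by (induction k) auto
  then have "0 < (1 + \<sigma> * pda_A \<sigma> \<gamma> R k) * (1 + \<gamma> * pda_A \<sigma> \<gamma> R k)"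
    using assms by (simp add: add_pos_nonneg)
  then show ?thesis
    using assms by simp
qed

lemma pda_A_eq_sum: "pda_A \<sigma> \<gamma> R k = (\<Sum>i<k. pda_a \<sigma> \<gamma> R (Suc i))"
  by (induction k) auto

lemma inner_pda_xbar_split:
  fixes B :: "real^'d^'n"
  assumes "a (Suc k) \<noteq> 0"
  shows "a (Suc k) * inner (- (B *v pda_xbar a x k)) (w - v)
    = a (Suc k) * inner (- (B *v x (Suc k))) (w - v)
      + (a (Suc k) * inner (B *v (x (Suc k) - x k)) (w - v)
         - a k * inner (B *v (x k - prev_iter x k)) (w' - v)
         - a k * inner (B *v (x k - prev_iter x k)) (w - w'))"
  using assms
  by (simp add: pda_xbar_def matrix_vector_right_distrib matrix_vector_mult_scaleR
      matrix_vector_mult_diff_distrib inner_add_left inner_diff_left inner_diff_right algebra_simps)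

lemma ereal_mult_add_shift:
  fixes g :: ereal
  assumes "a * s = a * t + m"
  shows "ereal a * (ereal s + g) = ereal a * (g + ereal t) + ereal m"
  using assms by (cases g) (auto simp: algebra_simps)

theorem lemma2:
  fixes B :: "real^'d^'n" and R \<sigma> \<gamma> :: real
    and gs :: "real^'n \<Rightarrow> ereal" and l :: "real^'d \<Rightarrow> ereal"
    and x0 u :: "real^'d" and y0 v :: "real^'n"
    and x :: "nat \<Rightarrow> real^'d" and y :: "nat \<Rightarrow> real^'n"
    and k :: nat
  assumes normB: "onorm (\<lambda>z. B *v z) = R" and Rpos: "0 < R"
    and gs_proper: "proper_fun gs" and gs_lsc: "lsc_fun gs"
    and gs_sc: "strongly_convex_ereal \<gamma> gs" and \<gamma>: "0 \<le> \<gamma>"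
    and l_proper: "proper_fun l" and l_lsc: "lsc_fun l"
    and l_sc: "strongly_convex_ereal \<sigma> l" and \<sigma>: "0 \<le> \<sigma>"
    and x0: "x0 \<in> edom l" and y0: "y0 \<in> edom gs"
    and u: "u \<in> edom l" and v: "v \<in> edom gs"
    and init_x: "x 0 = x0" and init_y: "y 0 = y0"
    and y_min: "\<And>j z. 1 \<le> j \<Longrightarrow>
        pda_psi B gs (pda_a \<sigma> \<gamma> R) y0 v x j (y j) \<le> pda_psi B gs (pda_a \<sigma> \<gamma> R) y0 v x j z"
    and x_min: "\<And>j z. 1 \<le> j \<Longrightarrow>
        pda_phi B l (pda_a \<sigma> \<gamma> R) x0 u y j (x j) \<le> pda_phi B l (pda_a \<sigma> \<gamma> R) x0 u y j z"
    and k: "1 \<le> k"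
  shows "pda_psi B gs (pda_a \<sigma> \<gamma> R) y0 v x k (y k)
          \<ge> pda_psi B gs (pda_a \<sigma> \<gamma> R) y0 v x (k - 1) (y (k - 1))
            + ereal ((1 + \<gamma> * pda_A \<sigma> \<gamma> R (k - 1)) / 2 * (norm (y k - y (k - 1)))\<^sup>2)
            + ereal (pda_a \<sigma> \<gamma> R k) * (gs (y k) + ereal (inner (- (B *v x k)) (y k - v)))
            + ereal (pda_a \<sigma> \<gamma> R k * inner (B *v (x k - x (k - 1))) (y k - v)
               - pda_a \<sigma> \<gamma> R (k - 1) * inner (B *v (x (k - 1) - prev_iter x (k - 1))) (y (k - 1) - v)
               - pda_a \<sigma> \<gamma> R (k - 1) * inner (B *v (x (k - 1) - prev_iter x (k - 1))) (y k - y (k - 1)))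
        \<and> pda_phi B l (pda_a \<sigma> \<gamma> R) x0 u y k (x k)
          \<ge> pda_phi B l (pda_a \<sigma> \<gamma> R) x0 u y (k - 1) (x (k - 1))
            + ereal ((1 + \<sigma> * pda_A \<sigma> \<gamma> R (k - 1)) / 2 * (norm (x k - x (k - 1)))\<^sup>2)
            + ereal (pda_a \<sigma> \<gamma> R k) * (ereal (inner (x k - u) (transpose B *v y k)) + l (x k))"
proof -
  obtain K where kK: "k = Suc K" using k by (cases k) auto
  define a where "a = pda_a \<sigma> \<gamma> R"
  define A where "A = pda_A \<sigma> \<gamma> R"
  have a_nonneg: "0 \<le> a i" for i
    using pda_a_pos[OF \<sigma> \<gamma> Rpos] by (cases i) (auto simp: a_def less_imp_le)
  have a_k: "a (Suc K) \<noteq> 0"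
    using pda_a_pos[OF \<sigma> \<gamma> Rpos, of K] unfolding a_def by linarith
  have A_K: "A K = (\<Sum>i<K. a (Suc i))"
    unfolding A_def a_def by (rule pda_A_eq_sum)
  have gs_nm: "\<And>z. gs z \<noteq> -\<infinity>" and l_nm: "\<And>z. l z \<noteq> -\<infinity>"
    using gs_proper l_proper unfolding proper_fun_def by blast+
  have "strongly_convex_ereal (1 + \<gamma> * A K) (pda_psi B gs a y0 v x K)"
    unfolding A_K by (rule strongly_convex_ereal_model[OF _ _ _ gs_sc gs_nm a_nonneg])
      (auto simp: inner_add_right inner_diff_right algebra_simps)
  then have psi_growth: "pda_psi B gs a y0 v x K (y K) + ereal ((1 + \<gamma> * A K) / 2 * (norm (y k - y K))\<^sup>2)
      \<le> pda_psi B gs a y0 v x K (y k)"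
    by (rule strongly_convex_ereal_minimizer_growth)
      (use y_min[folded a_def, of K] init_y in \<open>cases "K = 0"; simp\<close>)
  have "strongly_convex_ereal (1 + \<sigma> * A K) (pda_phi B l a x0 u y K)"
    unfolding A_K by (rule strongly_convex_ereal_model[OF _ _ _ l_sc l_nm a_nonneg])
      (auto simp: inner_add_left inner_diff_left algebra_simps)
  then have phi_growth: "pda_phi B l a x0 u y K (x K) + ereal ((1 + \<sigma> * A K) / 2 * (norm (x k - x K))\<^sup>2)
      \<le> pda_phi B l a x0 u y K (x k)"
    by (rule strongly_convex_ereal_minimizer_growth)
      (use x_min[folded a_def, of K] init_x in \<open>cases "K = 0"; simp\<close>)
  have split: "ereal (a k) * (ereal (inner (- (B *v pda_xbar a x K)) (y k - v)) + gs (y k))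
    = ereal (a k) * (gs (y k) + ereal (inner (- (B *v x k)) (y k - v)))
      + ereal (a k * inner (B *v (x k - x K)) (y k - v)
         - a K * inner (B *v (x K - prev_iter x K)) (y K - v)
         - a K * inner (B *v (x K - prev_iter x K)) (y k - y K))"
    unfolding kK by (intro ereal_mult_add_shift inner_pda_xbar_split a_k)
  show ?thesis
    unfolding a_def[symmetric] A_def[symmetric] kK diff_Suc_1 pda_psi.simps pda_phi.simps
    using add_right_mono[OF psi_growth] add_right_mono[OF phi_growth] split
    by (simp add: kK add.assoc)
qed

end
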